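(* Let $m$ be the weight defined below; all implicit constants are absolute. Then: (i) There is an absolute constant $C$ such that $1\le m(t,k,\eta)\le C$ for all $t\ge0$, $(k,\eta)\in\mathbb Z\times\mathbb R$. (ii) If $t\ge0$, $k\neq0$ and $(l,\xi)\in S_t$, then $\dfrac{1}{1+|t-\eta/k|}\lesssim\sqrt{\tfrac{\partial_tm}{m}(t,l,\xi)}\,\langle k-l,\eta-\xi\rangle^3$. (iii) If $t\ge1$, $k\neq0$ and $|k,\eta|\le2|l,\xi|$, then $$\frac{|k,\eta|}{k^2}\frac{1}{1+|t-\eta/k|^2}\lesssim\frac{\langle\eta/k^3\rangle^{1/2}}{1+|t-\eta/k|}\Big(1+\sqrt t\sqrt{\tfrac{\partial_tm}{m}(t,l,\xi)}\Big)\langle k-l,\eta-\xi\rangle^5+\frac{1}{\langle t\rangle^2}.$$ (iv) For all $t\ge0$, $\eta,\xi\in\mathbb R$ and $k\neq0$: $|m(t,k,\eta)-m(t,k,\xi)|\lesssim\dfrac{|\eta-\xi|}{|k|}$.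
   Context: For $(k,\eta)\in\mathbb Z\times\mathbb R$ write $|k,\eta|=|k|+|\eta|$ and $\langle k,\eta\rangle=(1+|k|^2+|\eta|^2)^{1/2}$, $\langle x\rangle=(1+x^2)^{1/2}$. Let $S_t=\{(k,\eta)\in\mathbb Z\times\mathbb R: |k,\eta|\le10t^2\}$. The weight $m(t,k,\eta)$ is defined by $m(0,k,\eta)=1$ and $\partial_tm(t,k,\eta)=\sup_{j\in\mathbb Z\setminus\{0\}}\Big(\frac{10}{1+(\eta/j-t)^2}\frac{1}{\langle k-j\rangle^3}\Big)m(t,k,\eta)$ if $(k,\eta)\in S_t$, and $\partial_tm(t,k,\eta)=0$ otherwise. *)

theory Defs
  imports "HOL-Analysis.Analysis"
begin

definition jbr :: "int \<Rightarrow> real \<Rightarrow> real" where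
  "jbr k \<eta> = sqrt (1 + (real_of_int k)\<^sup>2 + \<eta>\<^sup>2)"

definition jbr1 :: "real \<Rightarrow> real" where
  "jbr1 x = sqrt (1 + x\<^sup>2)"

definition S :: "real \<Rightarrow> (int \<times> real) set" where
  "S t = {(k, \<eta>). \<bar>real_of_int k\<bar> + \<bar>\<eta>\<bar> \<le> 10 * t\<^sup>2}"

definition mrate :: "real \<Rightarrow> int \<Rightarrow> real \<Rightarrow> real" where
  "mrate t k \<eta> =
     (if (k, \<eta>) \<in> S t then
        (SUP j\<in>{j::int. j \<noteq> 0}.
           (10 / (1 + (\<eta> / real_of_int j - t)\<^sup>2)) * (1 / (jbr1 (real_of_int (k - j))) ^ 3))
      else 0)"

text \<open>The weight m: the solution of m(0)=1, \<partial>_t m = mrate * m, i.e.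
  m(t,k,eta) = exp (integral over [0,t] of mrate).\<close>
definition mw :: "real \<Rightarrow> int \<Rightarrow> real \<Rightarrow> real" where
  "mw t k \<eta> = exp (integral {0..t} (\<lambda>s. mrate s k \<eta>))"

end

theory Submission
  imports Defs
begin

text \<open>The rate \<open>mrate\<close> is a supremum over \<open>j \<noteq> 0\<close> of Lorentzians in \<open>t\<close>, centred at \<open>\<eta>/j\<close>
  and weighted by \<open>\<langle>k - j\<rangle>\<^sup>-\<^sup>3\<close>. Dominating the supremum by the sum over \<open>j\<close>, each Lorentzian
  has mass at most \<open>\<pi>\<close> and the weights are summable, so \<open>\<integral> mrate = O(1)\<close>, which is (i).
  (ii) and (iii) are pointwise: the supremum is at least its term \<open>j = k\<close>, and if \<open>(l, \<xi>)\<close>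
  lies outside \<open>S t\<close> then \<open>\<langle>k - l, \<eta> - \<xi>\<rangle>\<close> is already of size \<open>t\<close>. For (iv), the terms for
  \<open>\<eta>\<close> and \<open>\<xi>\<close> differ by \<open>|\<eta> - \<xi>|/|j|\<close> times two Lorentzians and
  \<open>\<Sum>\<^sub>j \<langle>k - j\<rangle>\<^sup>-\<^sup>3/|j| = O(1/|k|)\<close>; the different entry times into \<open>S t\<close> cost the same amount,
  since right after entry the rate is only \<open>O(s/|k|)\<close>.\<close>

section \<open>Japanese brackets and Lorentzians\<close>

lemma jbr1_ge_1: "1 \<le> jbr1 x"
  unfolding jbr1_def by simp

lemma jbr1_ge_abs: "\<bar>x\<bar> \<le> jbr1 x"
proof -
  have "sqrt (x\<^sup>2) \<le> jbr1 x" unfolding jbr1_def by (rule real_sqrt_le_mono) simp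
  then show ?thesis by simp
qed

lemma jbr_ge_1: "1 \<le> jbr k \<eta>"
  unfolding jbr_def by simp

lemma jbr_ge_abs_int: "\<bar>real_of_int k\<bar> \<le> jbr k \<eta>"
proof -
  have "sqrt ((real_of_int k)\<^sup>2) \<le> jbr k \<eta>" unfolding jbr_def by (rule real_sqrt_le_mono) simp
  then show ?thesis by simp
qed

lemma jbr_ge_abs_real: "\<bar>\<eta>\<bar> \<le> jbr k \<eta>"
proof -
  have "sqrt (\<eta>\<^sup>2) \<le> jbr k \<eta>" unfolding jbr_def by (rule real_sqrt_le_mono) simp
  then show ?thesis by simp
qed

lemma jbr1_le_jbr: "jbr1 (real_of_int k) \<le> jbr k \<eta>"
  unfolding jbr_def jbr1_def by (rule real_sqrt_le_mono) simp

lemma inverse_jbr1_cube_pos: "0 < 1 / jbr1 x ^ 3"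
  using jbr1_ge_1[of x] by simp

lemma inverse_jbr1_cube_le_1: "1 / jbr1 x ^ 3 \<le> 1"
  using jbr1_ge_1[of x] by (simp add: power_le_one)

lemma inverse_jbr1_cube_le_lorentzian: "1 / jbr1 x ^ 3 \<le> 1 / (1 + x\<^sup>2)"
proof -
  have "1 / jbr1 x ^ 3 \<le> 1 / jbr1 x ^ 2"
    using jbr1_ge_1[of x] by (intro divide_left_mono) (auto simp: power_increasing)
  then show ?thesis by (simp add: jbr1_def)
qed

lemma lorentzian_pos: "0 < 1 / (1 + (x::real)\<^sup>2)"
  by (simp add: add_pos_nonneg)

lemma lorentzian_le_1: "1 / (1 + (x::real)\<^sup>2) \<le> 1"
  by (simp add: divide_le_eq_1 add_pos_nonneg)

lemma lorentzian_diff_le: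
  "\<bar>1 / (1 + x\<^sup>2) - 1 / (1 + y\<^sup>2)\<bar> \<le> \<bar>x - y\<bar> * (1 / (1 + x\<^sup>2) + 1 / (1 + (y::real)\<^sup>2))"
proof -
  have px: "0 < 1 + x\<^sup>2" "0 < 1 + y\<^sup>2" by (auto simp: add_pos_nonneg)
  have "\<bar>y + x\<bar> \<le> 2 + x\<^sup>2 + y\<^sup>2"
    using sum_squares_bound[of "\<bar>x\<bar>" 1] sum_squares_bound[of "\<bar>y\<bar>" 1] by simp
  then have "\<bar>x - y\<bar> * \<bar>y + x\<bar> \<le> \<bar>x - y\<bar> * (2 + x\<^sup>2 + y\<^sup>2)"
    by (rule mult_left_mono) simp
  moreover have "1 / (1 + x\<^sup>2) - 1 / (1 + y\<^sup>2) = (y - x) * (y + x) / ((1 + x\<^sup>2) * (1 + y\<^sup>2))"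
    using px by (simp add: field_simps power2_eq_square)
  moreover have "1 / (1 + x\<^sup>2) + 1 / (1 + y\<^sup>2) = (2 + x\<^sup>2 + y\<^sup>2) / ((1 + x\<^sup>2) * (1 + y\<^sup>2))"
    using px by (simp add: field_simps)
  ultimately show ?thesis
    using px by (simp add: abs_mult abs_minus_commute divide_right_mono)
qed

lemma lorentzian_lipschitz: "\<bar>1 / (1 + x\<^sup>2) - 1 / (1 + y\<^sup>2)\<bar> \<le> 2 * \<bar>x - (y::real)\<bar>"
proof -
  have "1 / (1 + x\<^sup>2) + 1 / (1 + y\<^sup>2) \<le> 2"
    using lorentzian_le_1[of x] lorentzian_le_1[of y] by linarith
  then have "\<bar>x - y\<bar> * (1 / (1 + x\<^sup>2) + 1 / (1 + y\<^sup>2)) \<le> \<bar>x - y\<bar> * 2"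
    by (rule mult_left_mono) simp
  then show ?thesis using lorentzian_diff_le[of x y] by linarith
qed

lemma lorentzian_continuous_on: "continuous_on A (\<lambda>s. 1 / (1 + ((\<alpha>::real) - s)\<^sup>2))"
  by (intro continuous_intros) (simp add: add_pos_nonneg less_imp_neq[symmetric])

lemma lorentzian_has_integral:
  assumes "a \<le> b"
  shows "((\<lambda>s. 1 / (1 + (\<alpha> - s)\<^sup>2)) has_integral (arctan (\<alpha> - a) - arctan (\<alpha> - b))) {a..b}"
proof -
  have "((\<lambda>s. - arctan (\<alpha> - s)) has_vector_derivative 1 / (1 + (\<alpha> - s)\<^sup>2)) (at s within {a..b})" for s
    unfolding has_real_derivative_iff_has_vector_derivative[symmetric]
    by (auto intro!: derivative_eq_intros simp: divide_simps add_pos_nonneg less_imp_neq[symmetric])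
  from fundamental_theorem_of_calculus[OF assms this] show ?thesis by simp
qed

lemma lorentzian_integral_le_pi: "integral {a..b} (\<lambda>s. 1 / (1 + (\<alpha> - s)\<^sup>2)) \<le> pi"
proof (cases "a \<le> b")
  case True
  then show ?thesis
    using integral_unique[OF lorentzian_has_integral[OF True, where \<alpha>=\<alpha>]]
      arctan_bounded[of "\<alpha> - a"] arctan_bounded[of "\<alpha> - b"] by linarith
qed simp

text \<open>A telescoping comparison with \<open>4/x - 4/(x+1)\<close> shows that \<open>\<Sum>\<^sub>m 1/(1+m\<^sup>2) \<le> 5\<close> over \<open>\<int>\<close>.\<close>

lemma sum_lorentzian_symmetric_interval:
  "(\<Sum>m\<in>{-int n..int n}. 1 / (1 + (real_of_int m)\<^sup>2)) \<le> 5 - 4 / (real n + 1)"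
proof (induction n)
  case (Suc n)
  define x where "x = real n + 1"
  have x: "1 \<le> x" by (simp add: x_def)
  have "{-int (Suc n)..int (Suc n)} = insert (-(int n + 1)) (insert (int n + 1) {-int n..int n})"
    by auto
  then have "(\<Sum>m\<in>{-int (Suc n)..int (Suc n)}. 1 / (1 + (real_of_int m)\<^sup>2))
      = 2 / (1 + x\<^sup>2) + (\<Sum>m\<in>{-int n..int n}. 1 / (1 + (real_of_int m)\<^sup>2))"
    by (simp add: x_def power2_eq_square algebra_simps)
  also have "\<dots> \<le> 2 / (1 + x\<^sup>2) + (5 - 4 / x)"
    using Suc by (simp add: x_def)
  also have "2 / (1 + x\<^sup>2) \<le> 4 / x - 4 / (x + 1)"
  proof -
    have "x \<le> x\<^sup>2" using x by (simp add: power2_eq_square)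
    moreover have "2 * (x * (x + 1)) = 2 * x\<^sup>2 + 2 * x" by (simp add: power2_eq_square algebra_simps)
    ultimately have "2 * (x * (x + 1)) \<le> 4 * (1 + x\<^sup>2)" by (simp add: algebra_simps)
    then show ?thesis
      using x by (simp add: field_simps add_pos_nonneg)
  qed
  finally show ?case by (simp add: x_def add.commute)
qed simp

lemma sum_lorentzian_int_le_5:
  assumes "finite F"
  shows "(\<Sum>m\<in>F. 1 / (1 + (real_of_int m)\<^sup>2)) \<le> 5"
proof -
  define n where "n = nat (\<Sum>m\<in>F. \<bar>m\<bar>)"
  have "F \<subseteq> {-int n..int n}"
  proof
    fix m assume "m \<in> F"
    then have "\<bar>m\<bar> \<le> (\<Sum>m\<in>F. \<bar>m\<bar>)" using assms by (intro member_le_sum) auto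
    then show "m \<in> {-int n..int n}" by (auto simp: n_def)
  qed
  then have "(\<Sum>m\<in>F. 1 / (1 + (real_of_int m)\<^sup>2)) \<le> (\<Sum>m\<in>{-int n..int n}. 1 / (1 + (real_of_int m)\<^sup>2))"
    by (intro sum_mono2) (auto simp: add_pos_nonneg less_imp_le)
  also have "\<dots> \<le> 5 - 4 / (real n + 1)" by (rule sum_lorentzian_symmetric_interval)
  also have "\<dots> \<le> 5" by simp
  finally show ?thesis .
qed

section \<open>Suprema over \<open>j \<noteq> 0\<close> and their integrals\<close>

lemma abs_SUP_diff_le:
  fixes f g :: "'a \<Rightarrow> real"
  assumes "A \<noteq> {}" "bdd_above (f ` A)" "bdd_above (g ` A)"
    and "\<And>x. x \<in> A \<Longrightarrow> \<bar>f x - g x\<bar> \<le> B"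
  shows "\<bar>(SUP x\<in>A. f x) - (SUP x\<in>A. g x)\<bar> \<le> B"
proof -
  have "(SUP x\<in>A. f x) \<le> (SUP x\<in>A. g x) + B"
  proof (rule cSUP_least[OF assms(1)])
    fix x assume "x \<in> A"
    then show "f x \<le> (SUP x\<in>A. g x) + B"
      using cSUP_upper[OF _ assms(3)] assms(4) by fastforce
  qed
  moreover have "(SUP x\<in>A. g x) \<le> (SUP x\<in>A. f x) + B"
  proof (rule cSUP_least[OF assms(1)])
    fix x assume "x \<in> A"
    then show "g x \<le> (SUP x\<in>A. f x) + B"
      using cSUP_upper[OF _ assms(2)] assms(4) by fastforce
  qed
  ultimately show ?thesis by linarith
qed

definition nonzero_upto :: "nat \<Rightarrow> int set" where
  "nonzero_upto N = {-int N..int N} - {0}"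

lemma finite_nonzero_upto [simp]: "finite (nonzero_upto N)"
  by (simp add: nonzero_upto_def)

lemma nonzero_ints_nonempty: "{j::int. j \<noteq> 0} \<noteq> {}"
  by (auto intro: exI[of _ 1])

lemma SUP_nonzero_le_partial_sum:
  fixes g :: "int \<Rightarrow> real"
  assumes "\<And>j. 0 \<le> g j" "bdd_above (g ` {j. j \<noteq> 0})" "0 < e"
  shows "\<exists>N0. \<forall>N\<ge>N0. (SUP j\<in>{j. j \<noteq> 0}. g j) \<le> (\<Sum>j\<in>nonzero_upto N. g j) + e"
proof -
  obtain j where j: "j \<noteq> 0" "(SUP j\<in>{j. j \<noteq> 0}. g j) - e < g j"
    using less_cSUP_iff[OF nonzero_ints_nonempty assms(2), of "(SUP j\<in>{j. j \<noteq> 0}. g j) - e"] assms(3) by auto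
  have "g j \<le> (\<Sum>j\<in>nonzero_upto N. g j)" if "nat \<bar>j\<bar> \<le> N" for N
    using that j(1) assms(1) by (intro member_le_sum) (auto simp: nonzero_upto_def)
  with j(2) show ?thesis by (intro exI[of _ "nat \<bar>j\<bar>"]) (auto intro: order_trans[of _ "g j + e"])
qed

text \<open>Dominated convergence for the minima \<open>min \<phi> (P N)\<close>, which converge to \<open>\<phi>\<close>.\<close>

lemma integral_le_of_approximation:
  fixes \<phi> :: "real \<Rightarrow> real" and P :: "nat \<Rightarrow> real \<Rightarrow> real"
  assumes "continuous_on {a..b} \<phi>" "\<And>N. continuous_on {a..b} (P N)"
    and "\<And>s. s \<in> {a..b} \<Longrightarrow> 0 \<le> \<phi> s" "\<And>N s. s \<in> {a..b} \<Longrightarrow> 0 \<le> P N s"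
    and "\<And>N. integral {a..b} (P N) \<le> B"
    and "\<And>s e. s \<in> {a..b} \<Longrightarrow> 0 < e \<Longrightarrow> \<exists>N0. \<forall>N\<ge>N0. \<phi> s \<le> P N s + e"
  shows "integral {a..b} \<phi> \<le> B"
proof -
  define g where "g N s = min (\<phi> s) (P N s)" for N s
  have g_int: "g N integrable_on {a..b}" for N
    unfolding g_def by (intro integrable_continuous_interval continuous_on_min assms(1,2))
  have "(\<lambda>N. g N s) \<longlonglongrightarrow> \<phi> s" if s: "s \<in> {a..b}" for s
  proof (rule LIMSEQ_I)
    fix r :: real assume "0 < r"
    then obtain N0 where "\<forall>N\<ge>N0. \<phi> s \<le> P N s + r / 2" using assms(6)[OF s, of "r / 2"] by auto
    then have "\<forall>N\<ge>N0. norm (g N s - \<phi> s) < r" using \<open>0 < r\<close> by (auto simp: g_def)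
    then show "\<exists>N0. \<forall>N\<ge>N0. norm (g N s - \<phi> s) < r" by blast
  qed
  moreover have "norm (g N s) \<le> \<phi> s" if "s \<in> {a..b}" for N s
    using assms(3,4)[OF that] by (auto simp: g_def)
  ultimately have "(\<lambda>N. integral {a..b} (g N)) \<longlonglongrightarrow> integral {a..b} \<phi>"
    using g_int integrable_continuous_interval[OF assms(1)] by (intro dominated_convergence(2)) auto
  moreover have "integral {a..b} (g N) \<le> B" for N
    using integral_le[OF g_int integrable_continuous_interval[OF assms(2)], of N N] assms(5)[of N]
    by (force simp: g_def)
  ultimately show ?thesis by (intro LIMSEQ_le_const2) auto
qed

section \<open>The rate and the weight\<close>

definition rate_term :: "int \<Rightarrow> real \<Rightarrow> int \<Rightarrow> real \<Rightarrow> real" where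
  "rate_term k \<eta> j s = 10 * (1 / jbr1 (real_of_int (k - j)) ^ 3) * (1 / (1 + (\<eta> / real_of_int j - s)\<^sup>2))"

definition rate_sup :: "int \<Rightarrow> real \<Rightarrow> real \<Rightarrow> real" where
  "rate_sup k \<eta> s = (SUP j\<in>{j. j \<noteq> 0}. rate_term k \<eta> j s)"

lemma mrate_eq_rate_sup: "mrate t k \<eta> = (if (k, \<eta>) \<in> S t then rate_sup k \<eta> t else 0)"
  unfolding mrate_def rate_sup_def rate_term_def by (simp add: mult.commute)

lemma rate_term_nonneg: "0 \<le> rate_term k \<eta> j s"
  unfolding rate_term_def using inverse_jbr1_cube_pos lorentzian_pos
  by (intro mult_nonneg_nonneg) (auto intro: less_imp_le)

lemma rate_term_le_10: "rate_term k \<eta> j s \<le> 10"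
proof -
  have "rate_term k \<eta> j s \<le> 10 * 1 * 1"
    unfolding rate_term_def using inverse_jbr1_cube_pos
    by (intro mult_mono inverse_jbr1_cube_le_1 lorentzian_le_1) (auto intro: less_imp_le)
  then show ?thesis by simp
qed

lemma rate_term_continuous_on: "continuous_on A (rate_term k \<eta> j)"
  unfolding rate_term_def by (intro continuous_intros lorentzian_continuous_on)

lemma bdd_above_rate_term: "bdd_above ((\<lambda>j. rate_term k \<eta> j s) ` A)"
  by (rule bdd_aboveI[where M = 10]) (auto simp: rate_term_le_10)

lemma rate_term_le_rate_sup: "j \<noteq> 0 \<Longrightarrow> rate_term k \<eta> j s \<le> rate_sup k \<eta> s"
  unfolding rate_sup_def by (rule cSUP_upper) (auto simp: bdd_above_rate_term)

lemma rate_sup_nonneg: "0 \<le> rate_sup k \<eta> s"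
  using rate_term_le_rate_sup[of 1 k \<eta> s] rate_term_nonneg[of k \<eta> 1 s] by simp

lemma rate_term_lipschitz: "\<bar>rate_term k \<eta> j s - rate_term k \<eta> j s'\<bar> \<le> 20 * \<bar>s - s'\<bar>"
proof -
  let ?c = "1 / jbr1 (real_of_int (k - j)) ^ 3" and ?a = "\<eta> / real_of_int j"
  have "\<bar>rate_term k \<eta> j s - rate_term k \<eta> j s'\<bar>
      = 10 * ?c * \<bar>1 / (1 + (?a - s)\<^sup>2) - 1 / (1 + (?a - s')\<^sup>2)\<bar>"
    unfolding rate_term_def right_diff_distrib[symmetric] abs_mult
    using inverse_jbr1_cube_pos[of "real_of_int (k - j)"] by simp
  also have "\<dots> \<le> 10 * 1 * (2 * \<bar>(?a - s) - (?a - s')\<bar>)"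
    using inverse_jbr1_cube_pos[of "real_of_int (k - j)"]
    by (intro mult_mono inverse_jbr1_cube_le_1 lorentzian_lipschitz) auto
  finally show ?thesis by (simp add: abs_minus_commute)
qed

lemma rate_sup_continuous_on: "continuous_on A (rate_sup k \<eta>)"
proof (rule lipschitz_on_continuous_on)
  show "20-lipschitz_on A (rate_sup k \<eta>)"
    unfolding rate_sup_def
    by (rule lipschitz_onI) (auto simp: dist_real_def bdd_above_rate_term rate_term_lipschitz
        intro!: abs_SUP_diff_le nonzero_ints_nonempty)
qed

lemma rate_term_integral_le:
  "integral {a..b} (rate_term k \<eta> j) \<le> 10 * pi * (1 / jbr1 (real_of_int (k - j)) ^ 3)"
proof -
  let ?c = "10 * (1 / jbr1 (real_of_int (k - j)) ^ 3)"
  have "integral {a..b} (rate_term k \<eta> j) = ?c * integral {a..b} (\<lambda>s. 1 / (1 + (\<eta> / real_of_int j - s)\<^sup>2))"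
    unfolding rate_term_def[abs_def]
    by (rule integral_mult_right)
  also have "\<dots> \<le> ?c * pi"
    using inverse_jbr1_cube_pos by (intro mult_left_mono lorentzian_integral_le_pi) (auto intro: less_imp_le)
  finally show ?thesis by (simp add: algebra_simps)
qed

lemma sum_inverse_jbr1_cube_le_5:
  assumes "finite J"
  shows "(\<Sum>j\<in>J. 1 / jbr1 (real_of_int (k - j)) ^ 3) \<le> 5"
proof -
  have "(\<Sum>j\<in>J. 1 / jbr1 (real_of_int (k - j)) ^ 3) \<le> (\<Sum>j\<in>J. 1 / (1 + (real_of_int (k - j))\<^sup>2))"
    by (intro sum_mono inverse_jbr1_cube_le_lorentzian)
  also have "\<dots> = (\<Sum>m\<in>(\<lambda>j. k - j) ` J. 1 / (1 + (real_of_int m)\<^sup>2))"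
    by (subst sum.reindex) (auto simp: inj_on_def)
  also have "\<dots> \<le> 5" using assms by (intro sum_lorentzian_int_le_5) simp
  finally show ?thesis .
qed

lemma rate_sup_integral_le: "integral {a..b} (rate_sup k \<eta>) \<le> 50 * pi"
proof (rule integral_le_of_approximation[where P = "\<lambda>N s. \<Sum>j\<in>nonzero_upto N. rate_term k \<eta> j s"])
  show "integral {a..b} (\<lambda>s. \<Sum>j\<in>nonzero_upto N. rate_term k \<eta> j s) \<le> 50 * pi" for N
  proof -
    have "integral {a..b} (\<lambda>s. \<Sum>j\<in>nonzero_upto N. rate_term k \<eta> j s)
        = (\<Sum>j\<in>nonzero_upto N. integral {a..b} (rate_term k \<eta> j))"
      by (intro integral_sum integrable_continuous_interval rate_term_continuous_on) simp
    also have "\<dots> \<le> 10 * pi * (\<Sum>j\<in>nonzero_upto N. 1 / jbr1 (real_of_int (k - j)) ^ 3)"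
      unfolding sum_distrib_left by (intro sum_mono rate_term_integral_le)
    also have "\<dots> \<le> 10 * pi * 5"
      by (intro mult_left_mono sum_inverse_jbr1_cube_le_5) simp_all
    finally show ?thesis by simp
  qed
  show "\<exists>N0. \<forall>N\<ge>N0. rate_sup k \<eta> s \<le> (\<Sum>j\<in>nonzero_upto N. rate_term k \<eta> j s) + e" if "0 < e" for s e
    unfolding rate_sup_def using that
    by (intro SUP_nonzero_le_partial_sum rate_term_nonneg bdd_above_rate_term)
qed (auto intro!: continuous_on_sum rate_sup_continuous_on rate_term_continuous_on
        rate_sup_nonneg rate_term_nonneg sum_nonneg)

definition entry_time :: "int \<Rightarrow> real \<Rightarrow> real" where
  "entry_time k \<eta> = sqrt ((\<bar>real_of_int k\<bar> + \<bar>\<eta>\<bar>) / 10)"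

lemma entry_time_nonneg: "0 \<le> entry_time k \<eta>"
  by (simp add: entry_time_def)

lemma entry_time_squared: "(entry_time k \<eta>)\<^sup>2 = (\<bar>real_of_int k\<bar> + \<bar>\<eta>\<bar>) / 10"
  by (simp add: entry_time_def)

lemma in_S_iff_entry_time_le: "0 \<le> s \<Longrightarrow> (k, \<eta>) \<in> S s \<longleftrightarrow> entry_time k \<eta> \<le> s"
  unfolding S_def entry_time_def by (simp add: real_sqrt_le_iff' real_le_rsqrt sqrt_le_D mult.commute)

lemma integral_mrate_eq: "integral {0..t} (\<lambda>s. mrate s k \<eta>) = integral {entry_time k \<eta>..t} (rate_sup k \<eta>)"
proof -
  have "{s. (k, \<eta>) \<in> S s} \<inter> {0..t} = {entry_time k \<eta>..t}"
    using entry_time_nonneg[of k \<eta>] in_S_iff_entry_time_le by fastforce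
  moreover have "integral {0..t} (\<lambda>s. mrate s k \<eta>)
      = integral {0..t} (\<lambda>s. if s \<in> {s. (k, \<eta>) \<in> S s} then rate_sup k \<eta> s else 0)"
    by (simp add: mrate_eq_rate_sup)
  ultimately show ?thesis
    by (simp only: integral_restrict_Int)
qed

lemma mw_eq: "mw t k \<eta> = exp (integral {entry_time k \<eta>..t} (rate_sup k \<eta>))"
  by (simp add: mw_def integral_mrate_eq)

lemma mw_ge_1: "1 \<le> mw t k \<eta>"
  unfolding mw_eq using rate_sup_continuous_on rate_sup_nonneg
  by (simp add: integral_nonneg integrable_continuous_interval)

lemma mw_le: "mw t k \<eta> \<le> exp (50 * pi)"
  unfolding mw_eq using rate_sup_integral_le by simp

section \<open>Resonant times \<open>t \<approx> \<eta>/k\<close>\<close>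

lemma rate_term_le_mrate: "(l, \<xi>) \<in> S t \<Longrightarrow> k \<noteq> 0 \<Longrightarrow> rate_term l \<xi> k t \<le> mrate t l \<xi>"
  by (simp add: mrate_eq_rate_sup rate_term_le_rate_sup)

lemma mrate_nonneg: "0 \<le> mrate t l \<xi>"
  by (simp add: mrate_eq_rate_sup rate_sup_nonneg)

text \<open>The term \<open>j = k\<close> of the supremum defining \<open>mrate t l \<xi>\<close> alone gives (ii).\<close>

lemma rate_term_diagonal_ge:
  assumes k: "k \<noteq> 0"
  shows "10 * (1 / jbr (k - l) (\<eta> - \<xi>) ^ 3)
           * (1 / (2 * (1 + \<bar>t - \<eta> / real_of_int k\<bar>) * jbr (k - l) (\<eta> - \<xi>))\<^sup>2)
         \<le> rate_term l \<xi> k t"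
proof -
  define D where "D = 1 + \<bar>t - \<eta> / real_of_int k\<bar>"
  define J where "J = jbr (k - l) (\<eta> - \<xi>)"
  have D1: "1 \<le> D" by (simp add: D_def)
  have J1: "1 \<le> J" by (simp add: J_def jbr_ge_1)
  have "\<bar>(\<xi> - \<eta>) / real_of_int k\<bar> \<le> \<bar>\<eta> - \<xi>\<bar>"
  proof -
    have "1 \<le> \<bar>real_of_int k\<bar>" using k by linarith
    then show ?thesis using k by (simp add: abs_minus_commute divide_le_eq mult_le_cancel_left1)
  qed
  moreover have "\<xi> / real_of_int k - t = (\<xi> - \<eta>) / real_of_int k + (\<eta> / real_of_int k - t)"
    by (simp add: diff_divide_distrib)
  moreover have "\<bar>\<eta> - \<xi>\<bar> \<le> J" by (simp add: J_def jbr_ge_abs_real)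
  moreover have "D + J \<le> 2 * D * J"
    using mult_mono[OF D1 J1] mult_nonneg_nonneg[of "D - 1" "J - 1"] D1 J1 by (simp add: algebra_simps)
  ultimately have "1 + \<bar>\<xi> / real_of_int k - t\<bar> \<le> 2 * D * J"
    unfolding D_def by (smt (verit))
  then have "(1 + \<bar>\<xi> / real_of_int k - t\<bar>)\<^sup>2 \<le> (2 * D * J)\<^sup>2"
    by (rule power_mono) simp
  moreover have "1 + x\<^sup>2 \<le> (1 + \<bar>x\<bar>)\<^sup>2" for x :: real
    by (simp add: power2_eq_square algebra_simps)
  ultimately have "1 + (\<xi> / real_of_int k - t)\<^sup>2 \<le> (2 * D * J)\<^sup>2"
    by (meson order_trans)
  then have "1 / (2 * D * J)\<^sup>2 \<le> 1 / (1 + (\<xi> / real_of_int k - t)\<^sup>2)"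
    using D1 J1 by (intro divide_left_mono mult_pos_pos) (auto simp: add_pos_nonneg)
  moreover have "1 / J ^ 3 \<le> 1 / jbr1 (real_of_int (l - k)) ^ 3"
  proof -
    have "jbr1 (real_of_int (l - k)) = jbr1 (real_of_int (k - l))"
      by (simp add: jbr1_def power2_commute)
    then have "jbr1 (real_of_int (l - k)) \<le> J" using jbr1_le_jbr[of "k - l"] by (simp add: J_def)
    then show ?thesis
      using jbr1_ge_1[of "real_of_int (l - k)"] by (intro divide_left_mono power_mono) auto
  qed
  ultimately have "10 * (1 / J ^ 3) * (1 / (2 * D * J)\<^sup>2) \<le> rate_term l \<xi> k t"
    unfolding rate_term_def using J1 jbr1_ge_1[of "real_of_int (l - k)"]
    by (intro mult_mono mult_left_mono) auto
  then show ?thesis unfolding D_def J_def .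
qed

lemma inverse_resonance_le_sqrt_mrate:
  assumes k: "k \<noteq> 0" and lS: "(l, \<xi>) \<in> S t"
  shows "1 / (1 + \<bar>t - \<eta> / real_of_int k\<bar>) \<le> sqrt (mrate t l \<xi>) * jbr (k - l) (\<eta> - \<xi>) ^ 3"
proof -
  define D where "D = 1 + \<bar>t - \<eta> / real_of_int k\<bar>"
  define J where "J = jbr (k - l) (\<eta> - \<xi>)"
  have D1: "1 \<le> D" by (simp add: D_def)
  have J1: "1 \<le> J" by (simp add: J_def jbr_ge_1)
  have "10 * (1 / J ^ 3) * (1 / (2 * D * J)\<^sup>2) \<le> rate_term l \<xi> k t"
    unfolding D_def J_def by (rule rate_term_diagonal_ge[OF k])
  also have "\<dots> \<le> mrate t l \<xi>" by (rule rate_term_le_mrate[OF lS k])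
  finally have "10 * (1 / J ^ 3) * (1 / (2 * D * J)\<^sup>2) * (J ^ 3)\<^sup>2 \<le> mrate t l \<xi> * (J ^ 3)\<^sup>2"
    by (rule mult_right_mono) simp
  moreover have "10 * (1 / J ^ 3) * (1 / (2 * D * J)\<^sup>2) * (J ^ 3)\<^sup>2 = 5 / 2 * J / D\<^sup>2"
    using D1 J1 by (simp add: field_simps power2_eq_square power3_eq_cube)
  moreover have "(1 / D)\<^sup>2 \<le> 5 / 2 * J / D\<^sup>2"
    using D1 J1 by (simp add: field_simps power2_eq_square)
  ultimately have "1 / D \<le> sqrt (mrate t l \<xi> * (J ^ 3)\<^sup>2)"
    by (intro real_le_rsqrt) linarith
  moreover have "sqrt (mrate t l \<xi> * (J ^ 3)\<^sup>2) = sqrt (mrate t l \<xi>) * J ^ 3"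
    using J1 by (simp only: real_sqrt_mult real_sqrt_abs) simp
  ultimately show ?thesis by (simp add: D_def J_def)
qed

lemma jbr_ge_time_outside_S:
  assumes t: "1 \<le> t" and k: "k \<noteq> 0"
    and resonant: "\<bar>t - \<eta> / real_of_int k\<bar> < t / 2" and kt: "\<bar>real_of_int k\<bar> < t"
    and outside: "(l, \<xi>) \<notin> S t"
  shows "t \<le> jbr (k - l) (\<eta> - \<xi>)"
proof -
  have "\<bar>\<eta>\<bar> = \<bar>real_of_int k\<bar> * abs (\<eta> / real_of_int k)" using k by simp
  also have "\<dots> \<le> t * (3 / 2 * t)"
    using resonant kt t by (intro mult_mono) linarith+
  finally have "\<bar>\<eta>\<bar> \<le> 3 / 2 * t\<^sup>2" by (simp add: power2_eq_square)
  moreover have "\<bar>real_of_int k - real_of_int l\<bar> \<le> jbr (k - l) (\<eta> - \<xi>)" "\<bar>\<eta> - \<xi>\<bar> \<le> jbr (k - l) (\<eta> - \<xi>)"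
    using jbr_ge_abs_int[of "k - l" "\<eta> - \<xi>"] jbr_ge_abs_real[of "\<eta> - \<xi>" "k - l"] by simp_all
  moreover have "\<bar>real_of_int l\<bar> \<le> \<bar>real_of_int k\<bar> + \<bar>real_of_int k - real_of_int l\<bar>" by simp
  moreover have "\<bar>\<xi>\<bar> \<le> \<bar>\<eta>\<bar> + \<bar>\<eta> - \<xi>\<bar>" by simp
  moreover have "t \<le> t\<^sup>2" using t by (simp add: power2_eq_square)
  moreover have "10 * t\<^sup>2 < \<bar>real_of_int l\<bar> + \<bar>\<xi>\<bar>" using outside by (simp add: S_def)
  ultimately show ?thesis using kt t by linarith
qed

lemma resonant_sqrt_time_le:
  assumes t: "1 \<le> t" and k: "k \<noteq> 0"
    and resonant: "\<bar>t - \<eta> / real_of_int k\<bar> < t / 2" and kt: "\<bar>real_of_int k\<bar> < t"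
  shows "sqrt t / (1 + \<bar>t - \<eta> / real_of_int k\<bar>)
           \<le> (1 + sqrt t * sqrt (mrate t l \<xi>)) * jbr (k - l) (\<eta> - \<xi>) ^ 5"
proof -
  define D where "D = 1 + \<bar>t - \<eta> / real_of_int k\<bar>"
  define W where "W = 1 + sqrt t * sqrt (mrate t l \<xi>)"
  define J where "J = jbr (k - l) (\<eta> - \<xi>)"
  have D1: "1 \<le> D" by (simp add: D_def)
  have W1: "1 \<le> W" using t by (simp add: W_def mrate_nonneg)
  have J1: "1 \<le> J" by (simp add: J_def jbr_ge_1)
  have "sqrt t / D \<le> W * J ^ 5"
  proof (cases "(l, \<xi>) \<in> S t")
    case True
    have "sqrt t / D = sqrt t * (1 / D)" by simp
    also have "\<dots> \<le> sqrt t * (sqrt (mrate t l \<xi>) * J ^ 3)"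
      using inverse_resonance_le_sqrt_mrate[OF k True, of \<eta>] t
      by (intro mult_left_mono) (simp_all add: D_def J_def)
    also have "\<dots> = (sqrt t * sqrt (mrate t l \<xi>)) * J ^ 3" by simp
    also have "\<dots> \<le> W * J ^ 5"
      using J1 W1 power_increasing[of 3 5 J] by (intro mult_mono) (auto simp: W_def)
    finally show ?thesis .
  next
    case False
    have "t \<le> t\<^sup>2" using t by (simp add: power2_eq_square)
    have "sqrt t / D \<le> sqrt t" using D1 t by (simp add: divide_le_eq mult_le_cancel_left1)
    also have "\<dots> \<le> t" using real_sqrt_le_mono[OF \<open>t \<le> t\<^sup>2\<close>] t by simp
    also have "\<dots> \<le> J ^ 1" using jbr_ge_time_outside_S[OF t k resonant kt False] by (simp add: J_def)
    also have "\<dots> \<le> 1 * J ^ 5" using power_increasing[of 1 5 J] J1 by simp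
    also have "\<dots> \<le> W * J ^ 5" using J1 W1 by (intro mult_right_mono) auto
    finally show ?thesis .
  qed
  then show ?thesis unfolding D_def W_def J_def .
qed

text \<open>Here \<open>r = \<eta>/k\<close>, \<open>K = |k|\<close>, \<open>D = 1 + |t - r|\<close>, \<open>Q = \<langle>\<eta>/k\<^sup>3\<rangle>\<^sup>1\<^sup>/\<^sup>2\<close>; away from the resonance
  \<open>r \<approx> t\<close> or for \<open>K \<ge> t\<close> the bound is elementary, and in the resonant case it follows
  from \<open>sqrt t \<le> 2 Q K\<close> and the estimate on \<open>sqrt t / D\<close>.\<close>

lemma resonance_weight_bound:
  fixes t K r D Q W J :: real
  assumes t: "1 \<le> t" and K: "1 \<le> K" and D: "D = 1 + \<bar>t - r\<bar>" and Q: "1 \<le> Q"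
    and sqrt_r: "0 \<le> r \<Longrightarrow> sqrt r \<le> Q * K"
    and W: "1 \<le> W" and J: "1 \<le> J"
    and resonant: "\<bar>t - r\<bar> < t / 2 \<Longrightarrow> K < t \<Longrightarrow> sqrt t / D \<le> W * J ^ 5"
  shows "2 * (1 + \<bar>r\<bar>) / (K * D\<^sup>2) \<le> 10 * (Q / D * W * J ^ 5)"
proof -
  have D1: "1 \<le> D" using D by simp
  have "1 \<le> W * J ^ 5" using W J one_le_power[OF J, of 5] mult_mono[of 1 W 1 "J ^ 5"] by simp
  then have "Q / D \<le> Q / D * (W * J ^ 5)" using Q D1 mult_left_mono[of 1 "W * J ^ 5" "Q / D"] by simp
  moreover have "1 / D \<le> Q / D" using D1 Q by (simp add: divide_right_mono)
  ultimately have one_over_D: "1 / D \<le> Q / D * W * J ^ 5" by (simp add: mult.assoc)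
  show ?thesis
  proof (cases "\<bar>t - r\<bar> < t / 2")
    case False
    then have "1 + \<bar>r\<bar> \<le> 3 * D" using D t by linarith
    then have "2 * (1 + \<bar>r\<bar>) / (K * D\<^sup>2) \<le> 2 * (3 * D) / (K * D\<^sup>2)"
      using K D1 by (intro divide_right_mono) auto
    also have "\<dots> = 6 / (K * D)" using D1 by (simp add: power2_eq_square)
    also have "\<dots> \<le> 6 / D" using K D1 by (simp add: frac_le)
    also have "\<dots> \<le> 10 * (Q / D * W * J ^ 5)" using one_over_D D1 by (simp add: divide_le_eq)
    finally show ?thesis .
  next
    case True
    then have r1: "1 + \<bar>r\<bar> \<le> 5 / 2 * t" and r0: "t / 2 \<le> r" using t by linarith+
    show ?thesis
    proof (cases "K < t")
      case False
      have "2 * (1 + \<bar>r\<bar>) / (K * D\<^sup>2) \<le> 2 * (5 / 2 * K) / (K * D\<^sup>2)"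
        using K D1 r1 False by (intro divide_right_mono) auto
      also have "\<dots> = 5 / D\<^sup>2" using K by simp
      also have "\<dots> \<le> 5 / D" using D1 by (simp add: power2_eq_square frac_le)
      also have "\<dots> \<le> 10 * (Q / D * W * J ^ 5)" using one_over_D D1 by (simp add: divide_le_eq)
      finally show ?thesis .
    next
      case Kt: True
      have "sqrt t \<le> sqrt (4 * r)" using r0 t by (intro real_sqrt_le_mono) linarith
      also have "\<dots> \<le> 2 * (Q * K)" using sqrt_r r0 t by (simp add: real_sqrt_mult)
      finally have sqrt_t: "sqrt t \<le> 2 * (Q * K)" .
      have "2 * (1 + \<bar>r\<bar>) / (K * D\<^sup>2) \<le> 2 * (5 / 2 * t) / (K * D\<^sup>2)"
        using K D1 r1 by (intro divide_right_mono) auto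
      also have "\<dots> = 5 / K * ((sqrt t / D) * (sqrt t / D))"
        using K D1 t by (simp add: power2_eq_square field_simps)
      also have "\<dots> \<le> 5 / K * ((2 * (Q * K) / D) * (W * J ^ 5))"
        using K D1 sqrt_t resonant[OF True Kt] Q t
        by (intro mult_left_mono mult_mono divide_right_mono) auto
      also have "\<dots> = 10 * (Q / D * W * J ^ 5)" using K D1 by (simp add: field_simps)
      finally show ?thesis .
    qed
  qed
qed

lemma growth_factor_le_resonance_bound:
  assumes t: "1 \<le> t" and k: "k \<noteq> 0"
  shows "(\<bar>real_of_int k\<bar> + \<bar>\<eta>\<bar>) / (real_of_int k)\<^sup>2 * (1 / (1 + \<bar>t - \<eta> / real_of_int k\<bar>\<^sup>2))
          \<le> 10 * (sqrt (jbr1 (\<eta> / (real_of_int k) ^ 3)) / (1 + \<bar>t - \<eta> / real_of_int k\<bar>)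
                  * (1 + sqrt t * sqrt (mrate t l \<xi>)) * jbr (k - l) (\<eta> - \<xi>) ^ 5
                 + 1 / (jbr1 t)\<^sup>2)"
proof -
  define K where "K = \<bar>real_of_int k\<bar>"
  define r where "r = \<eta> / real_of_int k"
  define D where "D = 1 + \<bar>t - r\<bar>"
  define Q where "Q = sqrt (jbr1 (\<eta> / (real_of_int k) ^ 3))"
  define W where "W = 1 + sqrt t * sqrt (mrate t l \<xi>)"
  define J where "J = jbr (k - l) (\<eta> - \<xi>)"
  have K1: "1 \<le> K" using k by (simp add: K_def)
  have D1: "1 \<le> D" by (simp add: D_def)
  have sqrt_r: "sqrt r \<le> Q * K" if "0 \<le> r"
  proof -
    have "\<eta> / (real_of_int k) ^ 3 = r / K\<^sup>2"
      using k by (simp add: r_def K_def power2_eq_square power3_eq_cube)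
    then have "sqrt (r / K\<^sup>2) \<le> Q"
      using jbr1_ge_abs[of "\<eta> / (real_of_int k) ^ 3"] that
      unfolding Q_def by (intro real_sqrt_le_mono) simp
    then show ?thesis using K1 by (simp add: real_sqrt_divide divide_le_eq)
  qed
  have "2 * (1 + \<bar>r\<bar>) / (K * D\<^sup>2) \<le> 10 * (Q / D * W * J ^ 5)"
  proof (rule resonance_weight_bound[OF t K1 D_def _ sqrt_r])
    show "1 \<le> Q" by (simp add: Q_def jbr1_ge_1)
    show "1 \<le> W" using t by (simp add: W_def mrate_nonneg)
    show "1 \<le> J" by (simp add: J_def jbr_ge_1)
    show "sqrt t / D \<le> W * J ^ 5" if "\<bar>t - r\<bar> < t / 2" "K < t"
      using resonant_sqrt_time_le[OF t k] that unfolding D_def W_def J_def r_def K_def by blast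
  qed
  moreover have "(\<bar>real_of_int k\<bar> + \<bar>\<eta>\<bar>) / (real_of_int k)\<^sup>2 = (1 + \<bar>r\<bar>) / K"
    using k by (simp add: r_def K_def field_simps power2_eq_square)
  moreover have "1 / (1 + \<bar>t - \<eta> / real_of_int k\<bar>\<^sup>2) \<le> 2 / D\<^sup>2"
  proof -
    have "D\<^sup>2 \<le> 2 * (1 + \<bar>t - r\<bar>\<^sup>2)"
      using zero_le_power2[of "1 - \<bar>t - r\<bar>"] by (simp add: D_def power2_eq_square algebra_simps)
    then show ?thesis using D1 by (simp add: r_def field_simps add_pos_nonneg)
  qed
  ultimately have "(\<bar>real_of_int k\<bar> + \<bar>\<eta>\<bar>) / (real_of_int k)\<^sup>2 * (1 / (1 + \<bar>t - \<eta> / real_of_int k\<bar>\<^sup>2))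
      \<le> 10 * (Q / D * W * J ^ 5)"
    using K1 mult_left_mono[of "1 / (1 + \<bar>t - \<eta> / real_of_int k\<bar>\<^sup>2)" "2 / D\<^sup>2" "(1 + \<bar>r\<bar>) / K"]
    by (simp add: mult.commute)
  also have "\<dots> \<le> 10 * (Q / D * W * J ^ 5 + 1 / (jbr1 t)\<^sup>2)" by simp
  finally show ?thesis unfolding Q_def D_def r_def W_def J_def .
qed

section \<open>Dependence of the weight on \<open>\<eta>\<close>\<close>

text \<open>Just after the entry time \<open>s \<approx> (|k|/10)\<^sup>1\<^sup>/\<^sup>2\<close> the rate is only \<open>O(s / |k|)\<close>: either \<open>j\<close>
  is comparable to \<open>k\<close>, and then \<open>\<eta>/j\<close> is far from \<open>s\<close>, or \<open>k - j\<close> is comparable to \<open>k\<close>.\<close>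

lemma rate_term_le_of_centre_far:
  assumes s: "3 / 10 \<le> s" and K1: "1 \<le> \<bar>real_of_int k\<bar>" and KS: "\<bar>real_of_int k\<bar> \<le> 10 * s\<^sup>2"
    and eta: "\<bar>\<eta>\<bar> \<le> s * \<bar>real_of_int k\<bar> / 4" and j: "\<bar>real_of_int k\<bar> / 2 \<le> \<bar>real_of_int j\<bar>"
  shows "rate_term k \<eta> j s \<le> 2000 * s / \<bar>real_of_int k\<bar>"
proof -
  define K where "K = \<bar>real_of_int k\<bar>"
  have "\<bar>\<eta> / real_of_int j\<bar> \<le> \<bar>\<eta>\<bar> / (K / 2)"
    unfolding abs_divide using j K1 by (intro divide_left_mono) (auto simp: K_def)
  also have "\<dots> \<le> (s * K / 4) / (K / 2)"
    using eta K1 by (intro divide_right_mono) (auto simp: K_def)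
  also have "\<dots> = s / 2" using K1 by (simp add: K_def)
  finally have "\<bar>s / 2\<bar> \<le> \<bar>\<eta> / real_of_int j - s\<bar>" using s by linarith
  then have "(s / 2)\<^sup>2 \<le> (\<eta> / real_of_int j - s)\<^sup>2" by (simp only: abs_le_square_iff)
  then have "1 / (1 + (\<eta> / real_of_int j - s)\<^sup>2) \<le> 1 / (s / 2)\<^sup>2"
    using s by (intro divide_left_mono) (auto simp: add_pos_nonneg)
  then have "rate_term k \<eta> j s \<le> 10 * 1 * (4 / s\<^sup>2)"
    unfolding rate_term_def using inverse_jbr1_cube_pos[of "real_of_int (k - j)"]
    by (intro mult_mono inverse_jbr1_cube_le_1) (auto simp: power2_eq_square)
  also have "\<dots> \<le> 2000 * s / K"
  proof -
    have "3 / 10 * (K / 10) \<le> s * s\<^sup>2" using s KS K1 by (intro mult_mono) (auto simp: K_def)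
    then show ?thesis using s K1 by (simp add: K_def field_simps power2_eq_square)
  qed
  finally show ?thesis by (simp add: K_def)
qed

lemma rate_term_le_of_weight_small:
  assumes s: "3 / 10 \<le> s" and K1: "1 \<le> \<bar>real_of_int k\<bar>" and j: "\<bar>real_of_int j\<bar> < \<bar>real_of_int k\<bar> / 2"
  shows "rate_term k \<eta> j s \<le> 2000 * s / \<bar>real_of_int k\<bar>"
proof -
  define K where "K = \<bar>real_of_int k\<bar>"
  have K: "1 \<le> K" using K1 by (simp add: K_def)
  have "K / 2 \<le> jbr1 (real_of_int (k - j))"
    using j jbr1_ge_abs[of "real_of_int (k - j)"] unfolding K_def by linarith
  then have "1 / jbr1 (real_of_int (k - j)) ^ 3 \<le> 1 / (K / 2) ^ 3"
    using K1 by (intro divide_left_mono power_mono) (auto simp: K_def)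
  then have "rate_term k \<eta> j s \<le> 10 * (1 / (K / 2) ^ 3) * 1"
    unfolding rate_term_def using inverse_jbr1_cube_pos[of "real_of_int (k - j)"] lorentzian_pos K1
    by (intro mult_mono lorentzian_le_1) (auto simp: K_def intro: less_imp_le)
  also have "\<dots> \<le> 2000 * s / K"
  proof -
    have "3 / 10 * 1 \<le> s * (K * K)" using s K mult_mono[OF K K] by (intro mult_mono) auto
    then show ?thesis using s K by (simp add: field_simps power3_eq_cube)
  qed
  finally show ?thesis by (simp add: K_def)
qed

lemma rate_term_le_near_entry:
  assumes k: "k \<noteq> 0" and s: "0 \<le> s" and in_S: "\<bar>real_of_int k\<bar> + \<bar>\<eta>\<bar> \<le> 10 * s\<^sup>2"
  shows "rate_term k \<eta> j s \<le> 2000 * s / \<bar>real_of_int k\<bar>"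
proof -
  define K where "K = \<bar>real_of_int k\<bar>"
  have K1: "1 \<le> K" using k by (simp add: K_def)
  have KS: "K \<le> 10 * s\<^sup>2" "\<bar>\<eta>\<bar> \<le> 10 * s\<^sup>2" using in_S by (auto simp: K_def)
  have s3: "3 / 10 \<le> s"
  proof (rule ccontr)
    assume "\<not> 3 / 10 \<le> s"
    then have "s\<^sup>2 < (3 / 10)\<^sup>2" using s by (intro power_strict_mono) auto
    then show False using KS K1 by (simp add: power2_eq_square)
  qed
  show ?thesis
  proof (cases "K \<le> 40 * s")
    case True
    then have "10 \<le> 2000 * s / K" using K1 by (simp add: le_divide_eq)
    then show ?thesis using rate_term_le_10[of k \<eta> j s] by (simp add: K_def)
  next
    case False
    have "s * (40 * s) \<le> s * K" using False s by (intro mult_left_mono) auto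
    then have "\<bar>\<eta>\<bar> \<le> s * K / 4" using KS(2)[unfolded power2_eq_square] by linarith
    then show ?thesis
      using rate_term_le_of_centre_far[OF s3] rate_term_le_of_weight_small[OF s3] K1 KS
      unfolding K_def by (cases "K / 2 \<le> \<bar>real_of_int j\<bar>") (auto simp: K_def)
  qed
qed

lemma rate_sup_le_near_entry:
  assumes "k \<noteq> 0" "0 \<le> s" "\<bar>real_of_int k\<bar> + \<bar>\<eta>\<bar> \<le> 10 * s\<^sup>2"
  shows "rate_sup k \<eta> s \<le> 2000 * s / \<bar>real_of_int k\<bar>"
  unfolding rate_sup_def
  by (rule cSUP_least[OF nonzero_ints_nonempty]) (use rate_term_le_near_entry[OF assms] in auto)

lemma rate_term_diff_integral_le:
  "integral {a..b} (\<lambda>s. \<bar>rate_term k \<eta> j s - rate_term k \<xi> j s\<bar>)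
           \<le> 20 * pi * (1 / jbr1 (real_of_int (k - j)) ^ 3) * (\<bar>\<eta> - \<xi>\<bar> / \<bar>real_of_int j\<bar>)"
proof -
  define c where "c = 1 / jbr1 (real_of_int (k - j)) ^ 3"
  define \<alpha> where "\<alpha> = \<eta> / real_of_int j"
  define \<beta> where "\<beta> = \<xi> / real_of_int j"
  define d where "d = \<bar>\<alpha> - \<beta>\<bar>"
  have c: "0 \<le> c" unfolding c_def using inverse_jbr1_cube_pos less_imp_le by blast
  have d: "d = \<bar>\<eta> - \<xi>\<bar> / \<bar>real_of_int j\<bar>"
    by (simp add: d_def \<alpha>_def \<beta>_def flip: diff_divide_distrib)
  let ?G = "\<lambda>s. 10 * c * d * (1 / (1 + (\<alpha> - s)\<^sup>2)) + 10 * c * d * (1 / (1 + (\<beta> - s)\<^sup>2))"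
  have pointwise: "\<bar>rate_term k \<eta> j s - rate_term k \<xi> j s\<bar> \<le> ?G s" for s
  proof -
    have "\<bar>rate_term k \<eta> j s - rate_term k \<xi> j s\<bar>
        = 10 * c * \<bar>1 / (1 + (\<alpha> - s)\<^sup>2) - 1 / (1 + (\<beta> - s)\<^sup>2)\<bar>"
      unfolding rate_term_def right_diff_distrib[symmetric] abs_mult c_def[symmetric] \<alpha>_def \<beta>_def
      using c by simp
    also have "\<dots> \<le> 10 * c * (\<bar>(\<alpha> - s) - (\<beta> - s)\<bar> * (1 / (1 + (\<alpha> - s)\<^sup>2) + 1 / (1 + (\<beta> - s)\<^sup>2)))"
      using c by (intro mult_left_mono lorentzian_diff_le) auto
    also have "\<dots> = ?G s" by (simp add: d_def algebra_simps)
    finally show ?thesis .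
  qed
  have "integral {a..b} (\<lambda>s. \<bar>rate_term k \<eta> j s - rate_term k \<xi> j s\<bar>) \<le> integral {a..b} ?G"
    by (intro integral_le pointwise integrable_continuous_interval continuous_intros
        lorentzian_continuous_on rate_term_continuous_on)
  also have "integral {a..b} ?G = 10 * c * d * integral {a..b} (\<lambda>s. 1 / (1 + (\<alpha> - s)\<^sup>2))
      + 10 * c * d * integral {a..b} (\<lambda>s. 1 / (1 + (\<beta> - s)\<^sup>2))"
    by (subst integral_add) (auto intro!: integrable_continuous_interval continuous_on_mult_left lorentzian_continuous_on
        simp del: times_divide_eq_right)
  also have "\<dots> \<le> 10 * c * d * pi + 10 * c * d * pi"
    using c by (intro add_mono mult_left_mono lorentzian_integral_le_pi) (auto simp: d_def)
  also have "\<dots> = 20 * pi * c * d" by simp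
  finally show ?thesis by (simp only: c_def d)
qed

lemma inverse_jbr1_cube_div_le:
  assumes j: "j \<noteq> 0" and k: "k \<noteq> 0"
  shows "1 / jbr1 (real_of_int (k - j)) ^ 3 * (1 / \<bar>real_of_int j\<bar>)
          \<le> 2 / \<bar>real_of_int k\<bar> * (1 / (1 + (real_of_int (k - j))\<^sup>2))"
proof -
  define x where "x = real_of_int (k - j)"
  define J where "J = jbr1 x"
  define K where "K = \<bar>real_of_int k\<bar>"
  define a where "a = \<bar>real_of_int j\<bar>"
  have J1: "1 \<le> J" by (simp add: J_def jbr1_ge_1)
  have a1: "1 \<le> a" using j by (simp add: a_def)
  have K1: "1 \<le> K" using k by (simp add: K_def)
  have "K \<le> a + \<bar>x\<bar>"
    unfolding K_def a_def x_def using abs_triangle_ineq[of "real_of_int j" "real_of_int k - real_of_int j"] by simp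
  also have "\<dots> \<le> a * (1 + \<bar>x\<bar>)" using a1 mult_right_mono[of 1 a "\<bar>x\<bar>"] by (simp add: algebra_simps)
  finally have "1 / a \<le> (1 + \<bar>x\<bar>) / K"
    using K1 a1 by (simp add: field_simps)
  then have "1 / J ^ 3 * (1 / a) \<le> 1 / J ^ 3 * ((1 + \<bar>x\<bar>) / K)"
    using J1 by (intro mult_left_mono) auto
  also have "\<dots> \<le> 1 / J ^ 3 * ((2 * J) / K)"
    using J1 K1 jbr1_ge_abs[of x] by (intro mult_left_mono divide_right_mono) (auto simp: J_def)
  also have "\<dots> = 2 / K * (1 / J\<^sup>2)" using J1 by (simp add: field_simps power2_eq_square power3_eq_cube)
  also have "J\<^sup>2 = 1 + x\<^sup>2" by (simp add: J_def jbr1_def)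
  finally show ?thesis by (simp add: J_def x_def K_def a_def)
qed

lemma sum_inverse_jbr1_cube_div_le:
  assumes "k \<noteq> 0" "finite J" "0 \<notin> J"
  shows "(\<Sum>j\<in>J. 1 / jbr1 (real_of_int (k - j)) ^ 3 * (1 / \<bar>real_of_int j\<bar>)) \<le> 10 / \<bar>real_of_int k\<bar>"
proof -
  have "(\<Sum>j\<in>J. 1 / jbr1 (real_of_int (k - j)) ^ 3 * (1 / \<bar>real_of_int j\<bar>))
      \<le> 2 / \<bar>real_of_int k\<bar> * (\<Sum>j\<in>J. 1 / (1 + (real_of_int (k - j))\<^sup>2))"
    unfolding sum_distrib_left using assms by (intro sum_mono inverse_jbr1_cube_div_le) auto
  also have "(\<Sum>j\<in>J. 1 / (1 + (real_of_int (k - j))\<^sup>2)) = (\<Sum>m\<in>(\<lambda>j. k - j) ` J. 1 / (1 + (real_of_int m)\<^sup>2))"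
    by (subst sum.reindex) (auto simp: inj_on_def)
  also have "2 / \<bar>real_of_int k\<bar> * \<dots> \<le> 2 / \<bar>real_of_int k\<bar> * 5"
    using assms by (intro mult_left_mono sum_lorentzian_int_le_5) auto
  finally show ?thesis by simp
qed

lemma bdd_above_abs_rate_term_diff:
  "bdd_above ((\<lambda>j. \<bar>rate_term k \<eta> j s - rate_term k \<xi> j s\<bar>) ` A)"
proof (rule bdd_aboveI[where M = 10])
  fix x assume "x \<in> (\<lambda>j. \<bar>rate_term k \<eta> j s - rate_term k \<xi> j s\<bar>) ` A"
  then obtain j where "x = \<bar>rate_term k \<eta> j s - rate_term k \<xi> j s\<bar>" by blast
  then show "x \<le> 10"
    using rate_term_nonneg[of k \<eta> j s] rate_term_le_10[of k \<eta> j s]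
      rate_term_nonneg[of k \<xi> j s] rate_term_le_10[of k \<xi> j s] by (simp add: abs_le_iff)
qed

lemma rate_sup_diff_le_SUP:
  "\<bar>rate_sup k \<eta> s - rate_sup k \<xi> s\<bar>
     \<le> (SUP j\<in>{j. j \<noteq> 0}. \<bar>rate_term k \<eta> j s - rate_term k \<xi> j s\<bar>)"
  unfolding rate_sup_def
proof (rule abs_SUP_diff_le[OF nonzero_ints_nonempty bdd_above_rate_term bdd_above_rate_term])
  fix j :: int assume "j \<in> {j. j \<noteq> 0}"
  then show "\<bar>rate_term k \<eta> j s - rate_term k \<xi> j s\<bar>
      \<le> (SUP j\<in>{j. j \<noteq> 0}. \<bar>rate_term k \<eta> j s - rate_term k \<xi> j s\<bar>)"
    by (rule cSUP_upper[OF _ bdd_above_abs_rate_term_diff])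
qed

lemma rate_sup_diff_integral_le:
  assumes k: "k \<noteq> 0"
  shows "integral {a..b} (\<lambda>s. \<bar>rate_sup k \<eta> s - rate_sup k \<xi> s\<bar>) \<le> 200 * pi * (\<bar>\<eta> - \<xi>\<bar> / \<bar>real_of_int k\<bar>)"
proof (rule integral_le_of_approximation[where P = "\<lambda>N s. \<Sum>j\<in>nonzero_upto N. \<bar>rate_term k \<eta> j s - rate_term k \<xi> j s\<bar>"])
  show "integral {a..b} (\<lambda>s. \<Sum>j\<in>nonzero_upto N. \<bar>rate_term k \<eta> j s - rate_term k \<xi> j s\<bar>)
      \<le> 200 * pi * (\<bar>\<eta> - \<xi>\<bar> / \<bar>real_of_int k\<bar>)" for N
  proof -
    have "integral {a..b} (\<lambda>s. \<Sum>j\<in>nonzero_upto N. \<bar>rate_term k \<eta> j s - rate_term k \<xi> j s\<bar>)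
        = (\<Sum>j\<in>nonzero_upto N. integral {a..b} (\<lambda>s. \<bar>rate_term k \<eta> j s - rate_term k \<xi> j s\<bar>))"
      by (intro integral_sum integrable_continuous_interval continuous_intros rate_term_continuous_on) simp
    also have "\<dots> \<le> 20 * pi * \<bar>\<eta> - \<xi>\<bar> * (\<Sum>j\<in>nonzero_upto N. 1 / jbr1 (real_of_int (k - j)) ^ 3 * (1 / \<bar>real_of_int j\<bar>))"
      unfolding sum_distrib_left
      by (intro sum_mono order_trans[OF rate_term_diff_integral_le]) (auto simp: nonzero_upto_def)
    also have "\<dots> \<le> 20 * pi * \<bar>\<eta> - \<xi>\<bar> * (10 / \<bar>real_of_int k\<bar>)"
      using k by (intro mult_left_mono sum_inverse_jbr1_cube_div_le) (auto simp: nonzero_upto_def)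
    finally show ?thesis by simp
  qed
  show "\<exists>N0. \<forall>N\<ge>N0. \<bar>rate_sup k \<eta> s - rate_sup k \<xi> s\<bar>
      \<le> (\<Sum>j\<in>nonzero_upto N. \<bar>rate_term k \<eta> j s - rate_term k \<xi> j s\<bar>) + e" if "0 < e" for s e
  proof -
    from SUP_nonzero_le_partial_sum[OF abs_ge_zero bdd_above_abs_rate_term_diff that]
    obtain N0 where "\<forall>N\<ge>N0. (SUP j\<in>{j. j \<noteq> 0}. \<bar>rate_term k \<eta> j s - rate_term k \<xi> j s\<bar>)
        \<le> (\<Sum>j\<in>nonzero_upto N. \<bar>rate_term k \<eta> j s - rate_term k \<xi> j s\<bar>) + e" ..
    then show ?thesis using rate_sup_diff_le_SUP[of k \<eta> s \<xi>] by (blast intro: order_trans)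
  qed
  show "continuous_on {a..b} (\<lambda>s. \<bar>rate_sup k \<eta> s - rate_sup k \<xi> s\<bar>)"
    by (intro continuous_on_rabs continuous_on_diff rate_sup_continuous_on)
  show "continuous_on {a..b} (\<lambda>s. \<Sum>j\<in>nonzero_upto N. \<bar>rate_term k \<eta> j s - rate_term k \<xi> j s\<bar>)" for N
    by (intro continuous_on_sum continuous_on_rabs continuous_on_diff rate_term_continuous_on)
qed (simp_all add: sum_nonneg)

lemma abs_exp_diff_le:
  fixes x y B :: real
  assumes "x \<le> B" "y \<le> B"
  shows "\<bar>exp x - exp y\<bar> \<le> exp B * \<bar>x - y\<bar>"
proof -
  have *: "exp a - exp b \<le> exp B * (a - b)" if "b \<le> a" "a \<le> B" for a b :: real
  proof -
    have "exp a * (1 + (b - a)) \<le> exp a * exp (b - a)"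
      using exp_ge_add_one_self[of "b - a"] by (intro mult_left_mono) auto
    then have "exp a - exp b \<le> exp a * (a - b)" by (simp add: algebra_simps flip: exp_add)
    also have "\<dots> \<le> exp B * (a - b)" using that by (intro mult_right_mono) auto
    finally show ?thesis .
  qed
  show ?thesis
    using *[of y x] *[of x y] assms by (cases "y \<le> x") (auto simp: abs_if)
qed

lemma integral_rate_sup_until_later_entry_le:
  assumes k: "k \<noteq> 0" and u: "entry_time k \<eta> \<le> u" "u \<le> entry_time k \<xi>"
  shows "integral {entry_time k \<eta>..u} (rate_sup k \<eta>) \<le> 200 * (\<bar>\<eta> - \<xi>\<bar> / \<bar>real_of_int k\<bar>)"
proof -
  define K where "K = \<bar>real_of_int k\<bar>"
  define a where "a = entry_time k \<eta>"
  have K1: "1 \<le> K" using k by (simp add: K_def)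
  have a0: "0 \<le> a" by (simp add: a_def entry_time_nonneg)
  have "integral {a..u} (rate_sup k \<eta>) \<le> integral {a..u} (\<lambda>s. 2000 * u / K)"
  proof (rule integral_le)
    fix s assume s: "s \<in> {a..u}"
    then have "a\<^sup>2 \<le> s\<^sup>2" using a0 by (intro power_mono) auto
    then have "rate_sup k \<eta> s \<le> 2000 * s / K"
      unfolding K_def using s a0 by (intro rate_sup_le_near_entry k) (auto simp: a_def entry_time_squared)
    also have "\<dots> \<le> 2000 * u / K" using s K1 by (intro divide_right_mono) auto
    finally show "rate_sup k \<eta> s \<le> 2000 * u / K" .
  qed (auto intro: integrable_continuous_interval rate_sup_continuous_on)
  also have "\<dots> = 2000 / K * ((u - a) * u)" using u by (simp add: a_def)
  also have "\<dots> \<le> 2000 / K * (\<bar>\<eta> - \<xi>\<bar> / 10)"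
  proof (rule mult_left_mono)
    have "(u - a) * u \<le> u\<^sup>2 - a\<^sup>2"
      using mult_nonneg_nonneg[OF a0, of "u - a"] u by (simp add: a_def power2_eq_square algebra_simps)
    also have "\<dots> \<le> (entry_time k \<xi>)\<^sup>2 - a\<^sup>2" using u a0 by (simp add: a_def power_mono)
    also have "\<dots> \<le> \<bar>\<eta> - \<xi>\<bar> / 10"
      using abs_triangle_ineq2_sym[of \<xi> \<eta>] by (simp add: a_def entry_time_squared field_simps)
    finally show "(u - a) * u \<le> \<bar>\<eta> - \<xi>\<bar> / 10" .
  qed (use K1 in simp)
  finally show ?thesis by (simp add: a_def K_def)
qed

lemma integral_rate_sup_from_entry_diff_le:
  assumes k: "k \<noteq> 0" and le: "\<bar>\<eta>\<bar> \<le> \<bar>\<xi>\<bar>"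
  shows "\<bar>integral {entry_time k \<eta>..t} (rate_sup k \<eta>) - integral {entry_time k \<xi>..t} (rate_sup k \<xi>)\<bar>
         \<le> (200 + 200 * pi) * (\<bar>\<eta> - \<xi>\<bar> / \<bar>real_of_int k\<bar>)"
proof -
  define a where "a = entry_time k \<eta>"
  define b where "b = entry_time k \<xi>"
  have ab: "a \<le> b" unfolding a_def b_def entry_time_def using le by (intro real_sqrt_le_mono) auto
  have degenerate: "integral {c..d} f = 0" if "d \<le> c" for c d :: real and f :: "real \<Rightarrow> real"
    using that integral_null[of c d f] by (simp add: content_real_eq_0)
  have int: "rate_sup k x integrable_on {c..d}" for x c d
    by (rule integrable_continuous_interval[OF rate_sup_continuous_on])
  show ?thesis
  proof (cases "t \<le> a")
    case True
    then show ?thesis using ab k by (simp add: a_def b_def degenerate)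
  next
    case False
    define u where "u = min b t"
    have u: "a \<le> u" "u \<le> t" "u \<le> b" using False ab by (auto simp: u_def)
    have "integral {a..t} (rate_sup k \<eta>) - integral {b..t} (rate_sup k \<xi>)
        = integral {a..u} (rate_sup k \<eta>) + integral {u..t} (\<lambda>s. rate_sup k \<eta> s - rate_sup k \<xi> s)"
    proof -
      have "integral {b..t} (rate_sup k \<xi>) = integral {u..t} (rate_sup k \<xi>)"
        by (cases "b \<le> t") (auto simp: u_def degenerate)
      then show ?thesis
        using Henstock_Kurzweil_Integration.integral_combine[OF u(1,2) int] integral_diff[OF int int, of u t \<eta> \<xi>] by simp
    qed
    moreover have "integral {a..u} (rate_sup k \<eta>) \<le> 200 * (\<bar>\<eta> - \<xi>\<bar> / \<bar>real_of_int k\<bar>)"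
      using u unfolding a_def b_def by (intro integral_rate_sup_until_later_entry_le k)
    moreover have "0 \<le> integral {a..u} (rate_sup k \<eta>)"
      by (intro integral_nonneg int rate_sup_nonneg)
    moreover have "\<bar>integral {u..t} (\<lambda>s. rate_sup k \<eta> s - rate_sup k \<xi> s)\<bar>
        \<le> integral {u..t} (\<lambda>s. \<bar>rate_sup k \<eta> s - rate_sup k \<xi> s\<bar>)"
      using integral_norm_bound_integral[of "\<lambda>s. rate_sup k \<eta> s - rate_sup k \<xi> s" "{u..t}"]
      by (simp add: integrable_continuous_interval continuous_on_diff continuous_on_rabs rate_sup_continuous_on)
    moreover have "integral {u..t} (\<lambda>s. \<bar>rate_sup k \<eta> s - rate_sup k \<xi> s\<bar>)
        \<le> 200 * pi * (\<bar>\<eta> - \<xi>\<bar> / \<bar>real_of_int k\<bar>)"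
      by (rule rate_sup_diff_integral_le[OF k])
    ultimately have "\<bar>integral {a..t} (rate_sup k \<eta>) - integral {b..t} (rate_sup k \<xi>)\<bar>
        \<le> 200 * (\<bar>\<eta> - \<xi>\<bar> / \<bar>real_of_int k\<bar>) + 200 * pi * (\<bar>\<eta> - \<xi>\<bar> / \<bar>real_of_int k\<bar>)"
      by (smt (verit))
    then show ?thesis by (simp add: a_def b_def algebra_simps)
  qed
qed

lemma mw_lipschitz:
  assumes "k \<noteq> 0"
  shows "\<bar>mw t k \<eta> - mw t k \<xi>\<bar> \<le> exp (50 * pi) * (200 + 200 * pi) * (\<bar>\<eta> - \<xi>\<bar> / \<bar>real_of_int k\<bar>)"
proof -
  have *: "\<bar>mw t k x - mw t k y\<bar> \<le> exp (50 * pi) * (200 + 200 * pi) * (\<bar>x - y\<bar> / \<bar>real_of_int k\<bar>)"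
    if "\<bar>x\<bar> \<le> \<bar>y\<bar>" for x y
  proof -
    have "\<bar>mw t k x - mw t k y\<bar>
        \<le> exp (50 * pi) * \<bar>integral {entry_time k x..t} (rate_sup k x) - integral {entry_time k y..t} (rate_sup k y)\<bar>"
      unfolding mw_eq by (intro abs_exp_diff_le rate_sup_integral_le)
    also have "\<dots> \<le> exp (50 * pi) * ((200 + 200 * pi) * (\<bar>x - y\<bar> / \<bar>real_of_int k\<bar>))"
      by (intro mult_left_mono integral_rate_sup_from_entry_diff_le assms that) simp
    finally show ?thesis by (simp only: mult.assoc)
  qed
  show ?thesis
    using *[of \<eta> \<xi>] *[of \<xi> \<eta>] by (cases "\<bar>\<eta>\<bar> \<le> \<bar>\<xi>\<bar>") (auto simp: abs_minus_commute)
qed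

theorem lemma4p4:
  shows
  "(\<exists>C::real. \<forall>t\<ge>0. \<forall>k \<eta>. 1 \<le> mw t k \<eta> \<and> mw t k \<eta> \<le> C)
   \<and> (\<exists>C>0. \<forall>t\<ge>0. \<forall>(k::int) (\<eta>::real) (l::int) (\<xi>::real).
        k \<noteq> 0 \<longrightarrow> (l, \<xi>) \<in> S t \<longrightarrow>
        1 / (1 + \<bar>t - \<eta> / real_of_int k\<bar>) \<le> C * (sqrt (mrate t l \<xi>) * jbr (k - l) (\<eta> - \<xi>) ^ 3))
   \<and> (\<exists>C>0. \<forall>t\<ge>1. \<forall>(k::int) (\<eta>::real) (l::int) (\<xi>::real).
        k \<noteq> 0 \<longrightarrow> \<bar>real_of_int k\<bar> + \<bar>\<eta>\<bar> \<le> 2 * (\<bar>real_of_int l\<bar> + \<bar>\<xi>\<bar>) \<longrightarrow>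
        (\<bar>real_of_int k\<bar> + \<bar>\<eta>\<bar>) / (real_of_int k)\<^sup>2 * (1 / (1 + \<bar>t - \<eta> / real_of_int k\<bar>\<^sup>2))
          \<le> C * (sqrt (jbr1 (\<eta> / (real_of_int k) ^ 3)) / (1 + \<bar>t - \<eta> / real_of_int k\<bar>)
                  * (1 + sqrt t * sqrt (mrate t l \<xi>)) * jbr (k - l) (\<eta> - \<xi>) ^ 5
                 + 1 / (jbr1 t)\<^sup>2))
   \<and> (\<exists>C>0. \<forall>t\<ge>0. \<forall>(k::int) (\<eta>::real) (\<xi>::real).
        k \<noteq> 0 \<longrightarrow> \<bar>mw t k \<eta> - mw t k \<xi>\<bar> \<le> C * (\<bar>\<eta> - \<xi>\<bar> / \<bar>real_of_int k\<bar>))"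
proof (intro conjI)
  show "\<exists>C::real. \<forall>t\<ge>0. \<forall>k \<eta>. 1 \<le> mw t k \<eta> \<and> mw t k \<eta> \<le> C"
    using mw_ge_1 mw_le by blast
  show "\<exists>C>0. \<forall>t\<ge>0. \<forall>k \<eta> l \<xi>. k \<noteq> 0 \<longrightarrow> (l, \<xi>) \<in> S t \<longrightarrow>
      1 / (1 + \<bar>t - \<eta> / real_of_int k\<bar>) \<le> C * (sqrt (mrate t l \<xi>) * jbr (k - l) (\<eta> - \<xi>) ^ 3)"
    using inverse_resonance_le_sqrt_mrate by (intro exI[of _ 1]) simp
  text \<open>The bound in (iii) holds without the hypothesis \<open>|k, \<eta>| \<le> 2 |l, \<xi>|\<close>.\<close>
  show "\<exists>C>0. \<forall>t\<ge>1. \<forall>k \<eta> l \<xi>. k \<noteq> 0 \<longrightarrow> \<bar>real_of_int k\<bar> + \<bar>\<eta>\<bar> \<le> 2 * (\<bar>real_of_int l\<bar> + \<bar>\<xi>\<bar>) \<longrightarrow>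
      (\<bar>real_of_int k\<bar> + \<bar>\<eta>\<bar>) / (real_of_int k)\<^sup>2 * (1 / (1 + \<bar>t - \<eta> / real_of_int k\<bar>\<^sup>2))
        \<le> C * (sqrt (jbr1 (\<eta> / (real_of_int k) ^ 3)) / (1 + \<bar>t - \<eta> / real_of_int k\<bar>)
                * (1 + sqrt t * sqrt (mrate t l \<xi>)) * jbr (k - l) (\<eta> - \<xi>) ^ 5 + 1 / (jbr1 t)\<^sup>2)"
    using growth_factor_le_resonance_bound by (intro exI[of _ 10]) simp
  show "\<exists>C>0. \<forall>t\<ge>0. \<forall>k \<eta> \<xi>. k \<noteq> 0 \<longrightarrow>
      \<bar>mw t k \<eta> - mw t k \<xi>\<bar> \<le> C * (\<bar>\<eta> - \<xi>\<bar> / \<bar>real_of_int k\<bar>)"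
    using mw_lipschitz by (intro exI[of _ "exp (50 * pi) * (200 + 200 * pi)"]) (simp add: add_pos_pos)
qed

end
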